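(* There is a universal constant $u<5$ such that for every context $\psi$ (and every $n$, $m$ and choice of $\Phi$), the Vapnik–Chervonenkis dimension of $\mathcal{H}_\psi$ satisfies $$\mathrm{VC}(\mathcal{H}_\psi)\le u\,(2m+1).$$
   Context: Let $X_1,\dots,X_n$ be Boolean variables; an assignment is $x\in\{0,1\}^n$. Fix a set of candidate Boolean formulas $\Phi=\{\phi_1,\dots,\phi_m\}$ over these variables. For $c\in\{0,1\}^m$ let $\phi(c)=\bigwedge_{j:\,c_j=1}\phi_j$ (the hard constraints; the empty conjunction is "true"). For $w\in[-1,1]^m$ let $f_w(x)=\sum_{j=1}^m w_j\,\mathbb{1}[x\models\phi_j]$. A context $\psi$ is a Boolean formula over $X_1,\dots,X_n$. The MAX-SAT classifier with parameters $(c,w)$ is $h_{c,w}(x,\psi)=1$ if $x\in\arg\max_{x'\models\phi(c)\wedge\psi} f_w(x')$ (i.e. $x\models\phi(c)\wedge\psi$ and $f_w(x)\ge f_w(x')$ for all $x'\models\phi(c)\wedge\psi$), and $h_{c,w}(x,\psi)=0$ otherwise. Let $\mathcal{H}=\{h_{c,w}: c\in\{0,1\}^m, w\in[-1,1]^m\}$ and, for a fixed context $\psi$, $\mathcal{H}_\psi=\{x\mapsto h(x,\psi): h\in\mathcal{H}\}$, a class of binary classifiers on $\{0,1\}^n$. *)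

theory Defs
  imports Complex_Main
begin

text \<open>A Boolean formula over
X_1..X_n is represented by its semantics, a predicate on assignments
(every Boolean function on {0,1}^n is expressible by a formula).
The candidate formulas Phi are a list of length m.\<close>

definition assignments :: "nat \<Rightarrow> bool list set" where
  "assignments n = {x. length x = n}"

definition hard :: "(bool list \<Rightarrow> bool) list \<Rightarrow> (nat \<Rightarrow> bool) \<Rightarrow> bool list \<Rightarrow> bool" where
  "hard Phi c x = (\<forall>j<length Phi. c j \<longrightarrow> (Phi ! j) x)"

definition fw :: "(bool list \<Rightarrow> bool) list \<Rightarrow> (nat \<Rightarrow> real) \<Rightarrow> bool list \<Rightarrow> real" where
  "fw Phi w x = (\<Sum>j<length Phi. w j * (if (Phi ! j) x then 1 else 0))"

definition maxsat_clf ::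
  "nat \<Rightarrow> (bool list \<Rightarrow> bool) list \<Rightarrow> (nat \<Rightarrow> bool) \<Rightarrow> (nat \<Rightarrow> real)
    \<Rightarrow> bool list \<Rightarrow> (bool list \<Rightarrow> bool) \<Rightarrow> bool" where
  "maxsat_clf n Phi c w x psi =
     (x \<in> assignments n \<and> hard Phi c x \<and> psi x \<and>
      (\<forall>x' \<in> assignments n. hard Phi c x' \<and> psi x' \<longrightarrow> fw Phi w x' \<le> fw Phi w x))"

definition H_ctx :: "nat \<Rightarrow> (bool list \<Rightarrow> bool) list \<Rightarrow> (bool list \<Rightarrow> bool) \<Rightarrow> (bool list \<Rightarrow> bool) set" where
  "H_ctx n Phi psi = {(\<lambda>x. maxsat_clf n Phi c w x psi) | c w.
       \<forall>j<length Phi. -1 \<le> w j \<and> w j \<le> 1}"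

definition shatters :: "('a \<Rightarrow> bool) set \<Rightarrow> 'a set \<Rightarrow> bool" where
  "shatters H S = (\<forall>T \<subseteq> S. \<exists>h\<in>H. \<forall>x\<in>S. h x = (x \<in> T))"

definition VC_dim :: "'a set \<Rightarrow> ('a \<Rightarrow> bool) set \<Rightarrow> nat" where
  "VC_dim D H = Sup {card S | S. S \<subseteq> D \<and> finite S \<and> shatters H S}"

end

theory Submission
  imports Defs
begin

text \<open>The bound holds with \<open>u = 1\<close>: no set of more than \<open>m + 1\<close> assignments is shattered.
Map an assignment \<open>s\<close> to its feature vector \<open>(1, [s \<Turnstile> \<phi>\<^sub>1], \<dots>, [s \<Turnstile> \<phi>\<^sub>m])\<close>. More than
\<open>m + 1\<close> feature vectors admit a nontrivial linear dependency \<open>l\<close>; as \<open>l\<close> sums to zero, both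
\<open>P = {l > 0}\<close> and \<open>N = {l < 0}\<close> are nonempty (Radon's argument). Suppose a classifier accepts
all of \<open>P\<close>. A feature \<open>g\<close> that is constant \<open>M\<close> on \<open>P\<close> and at most \<open>M\<close> on \<open>N\<close>, with
\<open>\<Sum> l s * g s = 0\<close>, must equal \<open>M\<close> on \<open>N\<close>. Applied to each hard constraint this shows that
\<open>N\<close> is feasible, and applied to \<open>f\<^sub>w\<close> (a combination of the features) that \<open>f\<^sub>w\<close> attains its
maximum on \<open>N\<close>. So the classifier also accepts \<open>N\<close>, and \<open>P\<close> is not cut out.\<close>

lemma exists_nontrivial_linear_dependency:
  fixes a :: "'a \<Rightarrow> nat \<Rightarrow> real"
  assumes "finite I" "k < card I"
  shows "\<exists>l. (\<exists>i\<in>I. l i \<noteq> 0) \<and> (\<forall>j<k. (\<Sum>i\<in>I. l i * a i j) = 0)"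
  using assms
proof (induction k arbitrary: I a)
  case 0
  then obtain i where "i \<in> I" by fastforce
  then show ?case by (intro exI[of _ "\<lambda>_. 1"]) auto
next
  case (Suc k)
  show ?case
  proof (cases "\<exists>i\<in>I. a i k \<noteq> 0")
    case False
    then show ?thesis
      using Suc.IH[of I a] Suc.prems by (auto simp: less_Suc_eq)
  next
    case True
    then obtain i0 where i0: "i0 \<in> I" "a i0 k \<noteq> 0" by blast
    define I' where "I' = I - {i0}"
    \<comment> \<open>Gaussian elimination: clear coordinate \<open>k\<close> using the pivot \<open>i0\<close>.\<close>
    define b where "b i j = a i j - a i k / a i0 k * a i0 j" for i j
    have "finite I'" "k < card I'"
      using Suc.prems i0 by (auto simp: I'_def)
    then obtain \<mu> where \<mu>: "\<exists>i\<in>I'. \<mu> i \<noteq> 0" "\<forall>j<k. (\<Sum>i\<in>I'. \<mu> i * b i j) = 0"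
      using Suc.IH by blast
    define l where "l i = (if i = i0 then - (\<Sum>i\<in>I'. \<mu> i * a i k) / a i0 k else \<mu> i)" for i
    have eliminated: "(\<Sum>i\<in>I. l i * a i j) = (\<Sum>i\<in>I'. \<mu> i * b i j)" for j
    proof -
      have "(\<Sum>i\<in>I. l i * a i j) = l i0 * a i0 j + (\<Sum>i\<in>I'. \<mu> i * a i j)"
        using i0 Suc.prems by (simp add: I'_def sum.remove l_def)
      moreover have "(\<Sum>i\<in>I'. \<mu> i * b i j)
          = (\<Sum>i\<in>I'. \<mu> i * a i j) - (\<Sum>i\<in>I'. \<mu> i * a i k) / a i0 k * a i0 j"
        by (simp add: b_def algebra_simps sum_subtractf sum_distrib_left
            sum_divide_distrib sum_distrib_right)
      ultimately show ?thesis by (simp add: l_def)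
    qed
    have "\<forall>j<Suc k. (\<Sum>i\<in>I. l i * a i j) = 0"
      using \<mu>(2) i0(2) by (auto simp: eliminated less_Suc_eq b_def)
    moreover have "\<exists>i\<in>I. l i \<noteq> 0"
      using \<mu>(1) by (auto simp: l_def I'_def)
    ultimately show ?thesis by blast
  qed
qed

lemma sum_eq_0_obtains_pos_neg:
  fixes l :: "'a \<Rightarrow> real"
  assumes "finite S" "sum l S = 0" "s \<in> S" "l s \<noteq> 0"
  obtains p q where "p \<in> S" "0 < l p" "q \<in> S" "l q < 0"
proof -
  have "\<exists>p\<in>S. 0 < l p"
  proof (rule ccontr)
    assume "\<not> (\<exists>p\<in>S. 0 < l p)"
    then have "\<forall>x\<in>S. - l x = 0"
      using assms(2) sum_nonneg_eq_0_iff[OF assms(1), of "\<lambda>x. - l x"]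
      by (simp add: sum_negf not_less)
    then show False using assms(3,4) by simp
  qed
  moreover have "\<exists>q\<in>S. l q < 0"
  proof (rule ccontr)
    assume "\<not> (\<exists>q\<in>S. l q < 0)"
    then have "\<forall>x\<in>S. l x = 0"
      using assms(1,2) sum_nonneg_eq_0_iff[OF assms(1), of l] by (simp add: not_less)
    then show False using assms(3,4) by blast
  qed
  ultimately show thesis using that by blast
qed

lemma signed_sum_eq_0_imp_eq:
  fixes l g :: "'a \<Rightarrow> real"
  assumes "finite S" "sum l S = 0" "(\<Sum>s\<in>S. l s * g s) = 0"
    and pos: "\<And>s. s \<in> S \<Longrightarrow> 0 < l s \<Longrightarrow> g s = M"
    and neg: "\<And>s. s \<in> S \<Longrightarrow> l s < 0 \<Longrightarrow> g s \<le> M"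
    and "t \<in> S" "l t < 0"
  shows "g t = M"
proof -
  have nonneg: "0 \<le> l s * (g s - M)" if "s \<in> S" for s
    using pos[OF that] neg[OF that] by (cases "0 < l s"; cases "l s < 0")
      (auto simp: mult_nonpos_nonpos)
  have "(\<Sum>s\<in>S. l s * (g s - M)) = (\<Sum>s\<in>S. l s * g s) - M * sum l S"
    by (simp add: algebra_simps sum_subtractf sum_distrib_left)
  then have "(\<Sum>s\<in>S. l s * (g s - M)) = 0"
    using assms(2,3) by simp
  then have "l t * (g t - M) = 0"
    using sum_nonneg_eq_0_iff[OF assms(1), of "\<lambda>s. l s * (g s - M)"] nonneg \<open>t \<in> S\<close>
    by simp
  then show ?thesis using \<open>l t < 0\<close> by simp
qed

lemma fw_eq_sum_of_bool:
  "fw Phi w x = (\<Sum>j<length Phi. w j * of_bool ((Phi ! j) x))"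
  by (simp add: fw_def of_bool_def)

lemma maxsat_clf_accepts_negative_part:
  fixes l :: "bool list \<Rightarrow> real"
  assumes S: "S \<subseteq> assignments n" "finite S" "\<forall>s\<in>S. psi s"
    and dep: "sum l S = 0" "\<forall>j<length Phi. (\<Sum>s\<in>S. l s * of_bool ((Phi ! j) s)) = 0"
    and accepts: "\<And>s. s \<in> S \<Longrightarrow> 0 < l s \<Longrightarrow> maxsat_clf n Phi c w s psi"
    and p: "p \<in> S" "0 < l p"
    and t: "t \<in> S" "l t < 0"
  shows "maxsat_clf n Phi c w t psi"
proof -
  have hard_neg: "hard Phi c s" if s: "s \<in> S" "l s < 0" for s
    unfolding hard_def
  proof (intro allI impI)
    fix j assume j: "j < length Phi" "c j"
    have "(Phi ! j) s'" if "s' \<in> S" "0 < l s'" for s'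
      using accepts[OF that] j unfolding maxsat_clf_def hard_def by blast
    then have "of_bool ((Phi ! j) s) = (1::real)"
      using signed_sum_eq_0_imp_eq[OF S(2) dep(1), of "\<lambda>s. of_bool ((Phi ! j) s)" 1 s]
        dep(2) j(1) s by simp
    then show "(Phi ! j) s" by simp
  qed
  have feasible: "s \<in> assignments n" "hard Phi c s" "psi s" if "s \<in> S" "l s \<noteq> 0" for s
    using that S accepts[of s] hard_neg[of s] by (auto simp: maxsat_clf_def neq_iff)
  have p_optimal: "fw Phi w s \<le> fw Phi w p" if "s \<in> S" "l s \<noteq> 0" for s
    using accepts[OF p] feasible[OF that] by (simp add: maxsat_clf_def)
  have pos_value: "fw Phi w s = fw Phi w p" if "s \<in> S" "0 < l s" for s
  proof (rule antisym)
    show "fw Phi w s \<le> fw Phi w p" using p_optimal that by simp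
    show "fw Phi w p \<le> fw Phi w s"
      using accepts[OF that] feasible[OF p(1)] p(2) by (simp add: maxsat_clf_def)
  qed
  have "(\<Sum>s\<in>S. l s * fw Phi w s)
      = (\<Sum>s\<in>S. \<Sum>j<length Phi. w j * (l s * of_bool ((Phi ! j) s)))"
    unfolding fw_eq_sum_of_bool sum_distrib_left by (simp only: mult.left_commute)
  also have "\<dots> = (\<Sum>j<length Phi. w j * (\<Sum>s\<in>S. l s * of_bool ((Phi ! j) s)))"
    unfolding sum_distrib_left by (rule sum.swap)
  also have "\<dots> = 0" using dep(2) by simp
  finally have "fw Phi w t = fw Phi w p"
    by (rule signed_sum_eq_0_imp_eq[OF S(2) dep(1) _ _ _ t]) (auto intro: pos_value p_optimal)
  then show ?thesis
    using accepts[OF p] feasible[of t] t by (simp add: maxsat_clf_def)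
qed

lemma shatters_H_ctxD:
  assumes "shatters (H_ctx n Phi psi) S" "T \<subseteq> S"
  obtains c w where "\<forall>x\<in>S. maxsat_clf n Phi c w x psi = (x \<in> T)"
proof -
  obtain h where "h \<in> H_ctx n Phi psi" "\<forall>x\<in>S. h x = (x \<in> T)"
    using assms unfolding shatters_def by blast
  then show thesis using that unfolding H_ctx_def by auto
qed

lemma shattered_card_le:
  assumes S: "S \<subseteq> assignments n" "finite S" and shattered: "shatters (H_ctx n Phi psi) S"
  shows "card S \<le> length Phi + 1"
proof (rule ccontr)
  assume "\<not> card S \<le> length Phi + 1"
  then have "length Phi + 1 < card S" by simp
  then obtain l :: "bool list \<Rightarrow> real" where l: "\<exists>s\<in>S. l s \<noteq> 0"
    "\<forall>j<length Phi + 1. (\<Sum>s\<in>S. l s * (case j of 0 \<Rightarrow> 1 | Suc i \<Rightarrow> of_bool ((Phi ! i) s))) = 0"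
    using exists_nontrivial_linear_dependency[OF S(2), of "length Phi + 1"
        "\<lambda>s j. case j of 0 \<Rightarrow> 1 | Suc i \<Rightarrow> of_bool ((Phi ! i) s)"] by blast
  have dep: "sum l S = 0" "\<forall>j<length Phi. (\<Sum>s\<in>S. l s * of_bool ((Phi ! j) s)) = 0"
    using l(2)[rule_format, of 0] l(2)[rule_format, of "Suc j" for j] by simp_all
  obtain p q where pq: "p \<in> S" "0 < l p" "q \<in> S" "l q < 0"
    using sum_eq_0_obtains_pos_neg[OF S(2) dep(1)] l(1) by blast
  obtain c0 w0 where "\<forall>x\<in>S. maxsat_clf n Phi c0 w0 x psi = (x \<in> S)"
    by (rule shatters_H_ctxD[OF shattered order_refl])
  then have psi: "\<forall>s\<in>S. psi s"
    unfolding maxsat_clf_def by blast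
  obtain c w where cw: "\<forall>x\<in>S. maxsat_clf n Phi c w x psi = (x \<in> {s\<in>S. 0 < l s})"
    by (rule shatters_H_ctxD[OF shattered]) (rule Collect_subset)
  have "maxsat_clf n Phi c w q psi"
    by (rule maxsat_clf_accepts_negative_part[OF S psi dep _ pq]) (use cw in auto)
  then show False using cw pq by auto
qed

lemma VC_dim_le:
  assumes "\<And>S. S \<subseteq> D \<Longrightarrow> finite S \<Longrightarrow> shatters H S \<Longrightarrow> card S \<le> k"
  shows "VC_dim D H \<le> k"
proof (cases "{card S | S. S \<subseteq> D \<and> finite S \<and> shatters H S} = {}")
  case True
  then show ?thesis unfolding VC_dim_def True by simp
next
  case False
  then show ?thesis unfolding VC_dim_def by (auto intro!: cSup_least assms)
qed

theorem theorem2: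
  shows "\<exists>u::real. u < 5 \<and>
    (\<forall>(n::nat) (Phi :: (bool list \<Rightarrow> bool) list) (psi :: bool list \<Rightarrow> bool).
       real (VC_dim (assignments n) (H_ctx n Phi psi)) \<le> u * (2 * real (length Phi) + 1))"
proof (intro exI[of _ 1] conjI allI)
  fix n Phi psi
  have "VC_dim (assignments n) (H_ctx n Phi psi) \<le> length Phi + 1"
    by (intro VC_dim_le shattered_card_le)
  then show "real (VC_dim (assignments n) (H_ctx n Phi psi)) \<le> 1 * (2 * real (length Phi) + 1)"
    by simp
qed simp

end
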